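(* Let $|\text{-}|:\mathcal E\to\mathcal B$ be a concrete category which is cofibred over $\mathcal B$ and such that the $\mathcal Q_{\mathcal B}$-category $\overline{\mathcal E}$ is conically cocomplete. Then $\overline{\mathcal E}$ is tensored.
   Context: $\mathcal B$ has small hom-sets; $|\text{-}|$ is faithful; a map $f:|X|\to|Y|$ is an $\mathcal E$-morphism if it is $|f'|$ for some $f':X\to Y$; $\overline{\mathcal E}(X,Y)$ is the set of $\mathcal E$-morphisms $|X|\to|Y|$. For $\mathbf f\subseteq\mathcal B(S,T)$, $\mathbf h\subseteq\mathcal B(S,U)$ put $\mathbf h\swarrow\mathbf f=\{g\in\mathcal B(T,U)\mid\forall f\in\mathbf f:g\circ f\in\mathbf h\}$. $\mathcal E$ is cofibred if for every $X$ and map $f:|X|\to T$ there is $f\star X$ with $|f\star X|=T$ such that $g:T\to|Z|$ is an $\mathcal E$-morphism $f\star X\to Z$ iff $g\circ f$ is an $\mathcal E$-morphism $X\to Z$. The fibre $\mathcal E_T$ is the class of $Y$ with $|Y|=T$. A presheaf of extent $T$ on $\overline{\mathcal E}$ is a family of subsets $\varphi_X\subseteq\mathcal B(|X|,T)$ ($X\in\mathrm{ob}\,\mathcal E$) with $\varphi_X\circ\overline{\mathcal E}(X',X)\subseteq\varphi_{X'}$; a supremum of it is $Y$ with $|Y|=T$ and $\overline{\mathcal E}(Y,Z)=\bigcap_X\overline{\mathcal E}(X,Z)\swarrow\varphi_X$ for all $Z$. $\overline{\mathcal E}$ is conically cocomplete if for every $T$ and every (possibly large) family $(Y_i)_{i\in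 I}$ in $\mathcal E_T$, the presheaf $\varphi_X=\bigcup_i\overline{\mathcal E}(X,Y_i)$ has a supremum. $\overline{\mathcal E}$ is tensored if for every $X$ and every subset $\mathbf u\subseteq\mathcal B(|X|,T)$ there is $Y$ with $|Y|=T$ and $\overline{\mathcal E}(Y,Z)=\overline{\mathcal E}(X,Z)\swarrow\mathbf u$ for all $Z$. *)

theory Defs
  imports Main
begin

definition category :: "('b \<Rightarrow> 'b \<Rightarrow> 'm set) \<Rightarrow> ('m \<Rightarrow> 'm \<Rightarrow> 'm) \<Rightarrow> ('b \<Rightarrow> 'm) \<Rightarrow> bool" where
  "category hom cmp ident \<longleftrightarrow>
     (\<forall>A. ident A \<in> hom A A) \<and>
     (\<forall>A B C f g. f \<in> hom A B \<longrightarrow> g \<in> hom B C \<longrightarrow> cmp g f \<in> hom A C) \<and>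
     (\<forall>A B f. f \<in> hom A B \<longrightarrow> cmp f (ident A) = f \<and> cmp (ident B) f = f) \<and>
     (\<forall>A B C D f g h. f \<in> hom A B \<longrightarrow> g \<in> hom B C \<longrightarrow> h \<in> hom C D \<longrightarrow>
        cmp h (cmp g f) = cmp (cmp h g) f)"

text \<open>A concrete category |-| : E \<rightarrow> B with faithful forgetful functor, presented
  (via faithfulness) by the object map U = |-| and, for objects X Y of E, the
  set Emor X Y of E-morphisms |X| \<rightarrow> |Y| (the images |f'| of f' : X \<rightarrow> Y),
  i.e. Emor X Y is the set written \<overline>E(X,Y) in the paper.\<close>
definition concrete_category ::
  "('b \<Rightarrow> 'b \<Rightarrow> 'm set) \<Rightarrow> ('m \<Rightarrow> 'm \<Rightarrow> 'm) \<Rightarrow> ('b \<Rightarrow> 'm) \<Rightarrow> ('e \<Rightarrow> 'b) \<Rightarrow> ('e \<Rightarrow> 'e \<Rightarrow> 'm set) \<Rightarrow> bool" where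
  "concrete_category hom cmp ident U Emor \<longleftrightarrow>
     category hom cmp ident \<and>
     (\<forall>X Y. Emor X Y \<subseteq> hom (U X) (U Y)) \<and>
     (\<forall>X. ident (U X) \<in> Emor X X) \<and>
     (\<forall>X Y Z f g. f \<in> Emor X Y \<longrightarrow> g \<in> Emor Y Z \<longrightarrow> cmp g f \<in> Emor X Z)"

definition lift_set ::
  "('b \<Rightarrow> 'b \<Rightarrow> 'm set) \<Rightarrow> ('m \<Rightarrow> 'm \<Rightarrow> 'm) \<Rightarrow> 'm set \<Rightarrow> 'm set \<Rightarrow> 'b \<Rightarrow> 'b \<Rightarrow> 'm set" where
  "lift_set hom cmp h f T V = {g \<in> hom T V. \<forall>f0 \<in> f. cmp g f0 \<in> h}"

definition cofibred ::
  "('b \<Rightarrow> 'b \<Rightarrow> 'm set) \<Rightarrow> ('m \<Rightarrow> 'm \<Rightarrow> 'm) \<Rightarrow> ('e \<Rightarrow> 'b) \<Rightarrow> ('e \<Rightarrow> 'e \<Rightarrow> 'm set) \<Rightarrow> bool" where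
  "cofibred hom cmp U Emor \<longleftrightarrow>
     (\<forall>X T f. f \<in> hom (U X) T \<longrightarrow>
        (\<exists>Y. U Y = T \<and>
           (\<forall>Z g. g \<in> hom T (U Z) \<longrightarrow> (g \<in> Emor Y Z \<longleftrightarrow> cmp g f \<in> Emor X Z))))"

definition is_presheaf ::
  "('b \<Rightarrow> 'b \<Rightarrow> 'm set) \<Rightarrow> ('m \<Rightarrow> 'm \<Rightarrow> 'm) \<Rightarrow> ('e \<Rightarrow> 'b) \<Rightarrow> ('e \<Rightarrow> 'e \<Rightarrow> 'm set) \<Rightarrow> 'b \<Rightarrow> ('e \<Rightarrow> 'm set) \<Rightarrow> bool" where
  "is_presheaf hom cmp U Emor T phi \<longleftrightarrow>
     (\<forall>X. phi X \<subseteq> hom (U X) T) \<and>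
     (\<forall>X X' p e. p \<in> phi X \<longrightarrow> e \<in> Emor X' X \<longrightarrow> cmp p e \<in> phi X')"

definition is_supremum ::
  "('b \<Rightarrow> 'b \<Rightarrow> 'm set) \<Rightarrow> ('m \<Rightarrow> 'm \<Rightarrow> 'm) \<Rightarrow> ('e \<Rightarrow> 'b) \<Rightarrow> ('e \<Rightarrow> 'e \<Rightarrow> 'm set) \<Rightarrow> 'b \<Rightarrow> ('e \<Rightarrow> 'm set) \<Rightarrow> 'e \<Rightarrow> bool" where
  "is_supremum hom cmp U Emor T phi Y \<longleftrightarrow>
     U Y = T \<and> (\<forall>Z. Emor Y Z = (\<Inter>X. lift_set hom cmp (Emor X Z) (phi X) T (U Z)))"

text \<open>Conical cocompleteness: every (possibly large) family in the fibre over T,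
  given as a set F of objects of the fibre, has a supremum of the presheaf
  X \<mapsto> \<Union>_{Y\<in>F} \<overline>E(X,Y).\<close>
definition conically_cocomplete ::
  "('b \<Rightarrow> 'b \<Rightarrow> 'm set) \<Rightarrow> ('m \<Rightarrow> 'm \<Rightarrow> 'm) \<Rightarrow> ('e \<Rightarrow> 'b) \<Rightarrow> ('e \<Rightarrow> 'e \<Rightarrow> 'm set) \<Rightarrow> bool" where
  "conically_cocomplete hom cmp U Emor \<longleftrightarrow>
     (\<forall>T F. F \<subseteq> {Y. U Y = T} \<longrightarrow>
        (\<exists>Y. is_supremum hom cmp U Emor T (\<lambda>X. \<Union>Y'\<in>F. Emor X Y') Y))"

definition tensored ::
  "('b \<Rightarrow> 'b \<Rightarrow> 'm set) \<Rightarrow> ('m \<Rightarrow> 'm \<Rightarrow> 'm) \<Rightarrow> ('e \<Rightarrow> 'b) \<Rightarrow> ('e \<Rightarrow> 'e \<Rightarrow> 'm set) \<Rightarrow> bool" where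
  "tensored hom cmp U Emor \<longleftrightarrow>
     (\<forall>X T u. u \<subseteq> hom (U X) T \<longrightarrow>
        (\<exists>Y. U Y = T \<and> (\<forall>Z. Emor Y Z = lift_set hom cmp (Emor X Z) u T (U Z))))"

end

theory Submission
  imports Defs
begin

text \<open>The tensor of X with u \<subseteq> B(|X|, T) is the conical supremum of the family of
  cocartesian lifts f \<star> X, f \<in> u: maps out of a conical supremum are exactly the maps
  that are E-morphisms out of every member of the family, and g is an E-morphism out of
  f \<star> X exactly when g \<circ> f is one out of X.\<close>

definition cocartesian_lift ::
  "('b \<Rightarrow> 'b \<Rightarrow> 'm set) \<Rightarrow> ('m \<Rightarrow> 'm \<Rightarrow> 'm) \<Rightarrow> ('e \<Rightarrow> 'b) \<Rightarrow> ('e \<Rightarrow> 'e \<Rightarrow> 'm set) \<Rightarrow> 'e \<Rightarrow> 'm \<Rightarrow> 'e \<Rightarrow> bool" where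
  "cocartesian_lift hom cmp U Emor X f Y \<longleftrightarrow>
     (\<forall>Z g. g \<in> hom (U Y) (U Z) \<longrightarrow> (g \<in> Emor Y Z \<longleftrightarrow> cmp g f \<in> Emor X Z))"

lemma cofibred_obtain_lift:
  assumes "cofibred hom cmp U Emor" and "f \<in> hom (U X) T"
  obtains Y where "U Y = T" and "cocartesian_lift hom cmp U Emor X f Y"
  using assms unfolding cofibred_def cocartesian_lift_def by metis

lemma cofibred_choose_lifts:
  assumes "cofibred hom cmp U Emor" and "u \<subseteq> hom (U X) T"
  obtains L where "\<And>f. f \<in> u \<Longrightarrow> U (L f) = T \<and> cocartesian_lift hom cmp U Emor X f (L f)"
proof -
  have "\<forall>f\<in>u. \<exists>Y. U Y = T \<and> cocartesian_lift hom cmp U Emor X f Y"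
    using assms by (metis cofibred_obtain_lift subsetD)
  then show thesis
    using that by metis
qed

lemma Emor_conical_supremum:
  assumes conc: "concrete_category hom cmp ident U Emor"
    and fibre: "F \<subseteq> {Y. U Y = T}"
    and sup: "is_supremum hom cmp U Emor T (\<lambda>X. \<Union>Y'\<in>F. Emor X Y') Y"
  shows "Emor Y Z = {g \<in> hom T (U Z). \<forall>Y'\<in>F. g \<in> Emor Y' Z}"
proof (intro equalityI subsetI)
  have ident_Emor: "\<And>X. ident (U X) \<in> Emor X X"
    and comp_Emor: "\<And>X Y Z f g. f \<in> Emor X Y \<Longrightarrow> g \<in> Emor Y Z \<Longrightarrow> cmp g f \<in> Emor X Z"
    and ident_right: "\<And>A B f. f \<in> hom A B \<Longrightarrow> cmp f (ident A) = f"
    using conc unfolding concrete_category_def category_def by blast+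
  have Emor_Y: "Emor Y Z = (\<Inter>X. lift_set hom cmp (Emor X Z) (\<Union>Y'\<in>F. Emor X Y') T (U Z))"
    using sup unfolding is_supremum_def by blast
  {
    fix g assume "g \<in> Emor Y Z"
    then have g: "g \<in> hom T (U Z)"
      and g_lifts: "\<And>X Y' e. Y' \<in> F \<Longrightarrow> e \<in> Emor X Y' \<Longrightarrow> cmp g e \<in> Emor X Z"
      unfolding Emor_Y lift_set_def by blast+
    have "g \<in> Emor Y' Z" if "Y' \<in> F" for Y'
      using g_lifts[OF that ident_Emor[of Y']] ident_right[OF g] fibre that by auto
    with g show "g \<in> {g \<in> hom T (U Z). \<forall>Y'\<in>F. g \<in> Emor Y' Z}" by blast
  }
  fix g assume "g \<in> {g \<in> hom T (U Z). \<forall>Y'\<in>F. g \<in> Emor Y' Z}"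
  then show "g \<in> Emor Y Z"
    unfolding Emor_Y lift_set_def using comp_Emor by blast
qed

theorem corollary4p8:
  fixes hom :: "'b \<Rightarrow> 'b \<Rightarrow> 'm set" and cmp :: "'m \<Rightarrow> 'm \<Rightarrow> 'm" and ident :: "'b \<Rightarrow> 'm"
    and U :: "'e \<Rightarrow> 'b" and Emor :: "'e \<Rightarrow> 'e \<Rightarrow> 'm set"
  assumes "concrete_category hom cmp ident U Emor"
    and "cofibred hom cmp U Emor"
    and "conically_cocomplete hom cmp U Emor"
  shows "tensored hom cmp U Emor"
  unfolding tensored_def
proof (intro allI impI)
  fix X T u assume u: "u \<subseteq> hom (U X) T"
  obtain L where L: "\<And>f. f \<in> u \<Longrightarrow> U (L f) = T \<and> cocartesian_lift hom cmp U Emor X f (L f)"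
    using cofibred_choose_lifts[OF assms(2) u] by blast
  have fibre: "L ` u \<subseteq> {Y. U Y = T}"
    using L by blast
  then obtain Y where sup: "is_supremum hom cmp U Emor T (\<lambda>X. \<Union>Y'\<in>L ` u. Emor X Y') Y"
    using assms(3) unfolding conically_cocomplete_def by blast
  have "Emor Y Z = lift_set hom cmp (Emor X Z) u T (U Z)" for Z
    unfolding Emor_conical_supremum[OF assms(1) fibre sup] lift_set_def
    using L unfolding cocartesian_lift_def by fastforce
  moreover have "U Y = T"
    using sup unfolding is_supremum_def by blast
  ultimately show "\<exists>Y. U Y = T \<and> (\<forall>Z. Emor Y Z = lift_set hom cmp (Emor X Z) u T (U Z))"
    by blast
qed

end
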